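(* Let $(U,\|\cdot\|)$ be a uniformly convex Banach space and let $Q\subseteq U$ be a nonempty, bounded, closed, convex set. Let $r>0$ and let $\alpha_n:Q\to\mathbb{R}$ ($n\in\mathbb{N}$) be functions with $\alpha_n(q)\to 1$ as $n\to\infty$ for every $q\in Q$. Suppose $T:Q\to Q$ satisfies: for all $p,q\in Q$ with $\|p-q\|<r$, $$\|T^np-T^nq\|\leq \alpha_n(q)\|p-q\|\quad\text{for every } n\in\mathbb{N}.$$ If there exists $q_0\in Q$ such that the asymptotic radius of the sequence $\{T^nq_0\}_n$ relative to $Q$ is less than $r$, then $T$ has a fixed point.
   Context: For a bounded sequence $\{x_n\}_n$ in $U$, its asymptotic radius relative to $Q$ is $\rho=\inf_{y\in Q}\limsup_{n\to\infty}\|x_n-y\|$. *)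

theory Defs
  imports "HOL-Analysis.Analysis"
begin

definition uniformly_convex :: "'a::real_normed_vector itself \<Rightarrow> bool" where
  "uniformly_convex (_::'a itself) \<longleftrightarrow>
     (\<forall>\<epsilon>>0. \<exists>\<delta>>0. \<forall>x y::'a. norm x \<le> 1 \<and> norm y \<le> 1 \<and> norm (x - y) \<ge> \<epsilon>
        \<longrightarrow> norm ((1/2) *\<^sub>R (x + y)) \<le> 1 - \<delta>)"

definition asymptotic_radius :: "'a::real_normed_vector set \<Rightarrow> (nat \<Rightarrow> 'a) \<Rightarrow> ereal" where
  "asymptotic_radius Q x = (INF y\<in>Q. limsup (\<lambda>n. ereal (norm (x n - y))))"

end

(* Write x n = T^n q0 and let rho < r be its asymptotic radius relative to Q. By uniform
   convexity, two points of Q whose limsup-distance to x is close to rho must be close to each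
   other, since otherwise their midpoint, which lies in Q, would beat rho. Hence approximate
   asymptotic centres form Cauchy sequences, and x has an asymptotic centre z in Q. Eventually
   norm (x n - z) < r, so norm (x (n + m) - T^m z) <= alpha m z * norm (x n - z); as alpha m z
   tends to 1, the points T^m z are approximate asymptotic centres too, hence T^m z converges
   to z. The hypothesis for n = 1 makes T continuous at z, so T z = z. *)

theory Submission
  imports Defs
begin

lemma uniformly_convex_midpoint_bound:
  fixes \<epsilon> R :: real
  assumes "uniformly_convex TYPE('a::real_normed_vector)" and "\<epsilon> > 0" and "R > 0"
  obtains \<delta> where "\<delta> > 0"
    and "\<And>u v :: 'a. \<And>s. s \<le> R \<Longrightarrow> norm u \<le> s \<Longrightarrow> norm v \<le> s \<Longrightarrow> \<epsilon> \<le> norm (u - v) \<Longrightarrow>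
           norm (midpoint u v) \<le> s - \<delta>"
proof -
  have "\<forall>e>0. \<exists>\<delta>>0. \<forall>u v :: 'a. norm u \<le> 1 \<and> norm v \<le> 1 \<and> e \<le> norm (u - v)
      \<longrightarrow> norm ((1/2) *\<^sub>R (u + v)) \<le> 1 - \<delta>"
    using assms(1) unfolding uniformly_convex_def .
  moreover have "\<epsilon> / R > 0" using assms(2,3) by simp
  ultimately obtain \<delta>\<^sub>0 where "\<delta>\<^sub>0 > 0" and \<delta>\<^sub>0: "\<forall>u v :: 'a. norm u \<le> 1 \<and> norm v \<le> 1 \<and> \<epsilon> / R \<le> norm (u - v)
      \<longrightarrow> norm ((1/2) *\<^sub>R (u + v)) \<le> 1 - \<delta>\<^sub>0"
    by blast
  (* Rescale by 1/s to the unit ball; since norm (u - v) \<le> 2 s, the gain \<delta>\<^sub>0 s is at least \<delta>\<^sub>0 \<epsilon> / 2. *)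
  show thesis
  proof
    show "\<delta>\<^sub>0 * \<epsilon> / 2 > 0" using \<open>\<delta>\<^sub>0 > 0\<close> \<open>\<epsilon> > 0\<close> by simp
  next
    fix u v :: 'a and s :: real
    assume "s \<le> R" "norm u \<le> s" "norm v \<le> s" "\<epsilon> \<le> norm (u - v)"
    have "\<epsilon> \<le> 2 * s"
      using \<open>\<epsilon> \<le> norm (u - v)\<close> norm_triangle_ineq4[of u v] \<open>norm u \<le> s\<close> \<open>norm v \<le> s\<close> by linarith
    then have "s > 0" using \<open>\<epsilon> > 0\<close> by linarith
    have "norm ((1/s) *\<^sub>R u) \<le> 1" "norm ((1/s) *\<^sub>R v) \<le> 1"
      using \<open>s > 0\<close> \<open>norm u \<le> s\<close> \<open>norm v \<le> s\<close> by simp_all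
    moreover have "\<epsilon> / R \<le> norm ((1/s) *\<^sub>R u - (1/s) *\<^sub>R v)"
    proof -
      have "\<epsilon> / R \<le> \<epsilon> / s" using \<open>s > 0\<close> \<open>s \<le> R\<close> \<open>\<epsilon> > 0\<close> by (simp add: frac_le)
      also have "\<dots> \<le> norm (u - v) / s" using \<open>s > 0\<close> \<open>\<epsilon> \<le> norm (u - v)\<close> by (simp add: divide_right_mono)
      also have "\<dots> = norm ((1/s) *\<^sub>R u - (1/s) *\<^sub>R v)"
        using \<open>s > 0\<close> by (simp flip: scaleR_diff_right)
      finally show ?thesis .
    qed
    ultimately have "norm ((1/2) *\<^sub>R ((1/s) *\<^sub>R u + (1/s) *\<^sub>R v)) \<le> 1 - \<delta>\<^sub>0"
      using \<delta>\<^sub>0 by blast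
    also have "(1/2) *\<^sub>R ((1/s) *\<^sub>R u + (1/s) *\<^sub>R v) = (1/s) *\<^sub>R midpoint u v"
      by (simp add: midpoint_def algebra_simps)
    finally have "norm (midpoint u v) / s \<le> 1 - \<delta>\<^sub>0"
      using \<open>s > 0\<close> by simp
    then have "norm (midpoint u v) \<le> s - \<delta>\<^sub>0 * s"
      using \<open>s > 0\<close> by (simp add: divide_le_eq left_diff_distrib)
    moreover have "\<delta>\<^sub>0 * \<epsilon> / 2 \<le> \<delta>\<^sub>0 * s" using \<open>\<epsilon> \<le> 2 * s\<close> \<open>\<delta>\<^sub>0 > 0\<close> by simp
    ultimately show "norm (midpoint u v) \<le> s - \<delta>\<^sub>0 * \<epsilon> / 2" by linarith
  qed
qed

lemma asymptotic_radius_nonneg: "0 \<le> asymptotic_radius Q x"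
  unfolding asymptotic_radius_def by (intro INF_greatest le_Limsup) auto

lemma asymptotic_radius_le:
  assumes "y \<in> Q" and "eventually (\<lambda>n. norm (x n - y) \<le> c) sequentially"
  shows "asymptotic_radius Q x \<le> ereal c"
proof -
  have "asymptotic_radius Q x \<le> limsup (\<lambda>n. ereal (norm (x n - y)))"
    unfolding asymptotic_radius_def using \<open>y \<in> Q\<close> by (rule INF_lower)
  also have "\<dots> \<le> ereal c"
    using assms(2) by (intro Limsup_bounded) (auto elim: eventually_mono)
  finally show ?thesis .
qed

lemma asymptotic_radius_lessE:
  assumes "asymptotic_radius Q x < ereal c"
  obtains y where "y \<in> Q" and "eventually (\<lambda>n. norm (x n - y) < c) sequentially"
proof -
  obtain y where "y \<in> Q" and "limsup (\<lambda>n. ereal (norm (x n - y))) < ereal c"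
    using assms unfolding asymptotic_radius_def by (auto simp: INF_less_iff)
  with Limsup_lessD that show thesis by fastforce
qed

lemma approximate_centers_close:
  fixes x :: "nat \<Rightarrow> 'a::real_normed_vector"
  assumes "uniformly_convex TYPE('a)" and "convex Q"
    and \<rho>: "asymptotic_radius Q x = ereal \<rho>" and "\<epsilon> > 0"
  obtains \<eta> where "\<eta> > 0"
    and "\<And>y y'. y \<in> Q \<Longrightarrow> y' \<in> Q \<Longrightarrow>
           eventually (\<lambda>n. norm (x n - y) < \<rho> + \<eta>) sequentially \<Longrightarrow>
           eventually (\<lambda>n. norm (x n - y') < \<rho> + \<eta>) sequentially \<Longrightarrow> norm (y - y') < \<epsilon>"
proof -
  have "\<rho> + 1 > 0" using asymptotic_radius_nonneg[of Q x] \<rho> by simp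
  then obtain \<delta> where "\<delta> > 0" and \<delta>: "\<And>u v :: 'a. \<And>s. s \<le> \<rho> + 1 \<Longrightarrow> norm u \<le> s \<Longrightarrow> norm v \<le> s \<Longrightarrow>
      \<epsilon> \<le> norm (u - v) \<Longrightarrow> norm (midpoint u v) \<le> s - \<delta>"
    using uniformly_convex_midpoint_bound[OF assms(1) \<open>\<epsilon> > 0\<close>] by blast
  define \<eta> where "\<eta> = min 1 (\<delta> / 2)"
  show thesis
  proof
    show "\<eta> > 0" using \<open>\<delta> > 0\<close> by (simp add: \<eta>_def)
  next
    fix y y' assume "y \<in> Q" "y' \<in> Q"
      and near_y: "eventually (\<lambda>n. norm (x n - y) < \<rho> + \<eta>) sequentially"
      and near_y': "eventually (\<lambda>n. norm (x n - y') < \<rho> + \<eta>) sequentially"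
    show "norm (y - y') < \<epsilon>"
    proof (rule ccontr)
      assume "\<not> norm (y - y') < \<epsilon>"
      then have far: "\<epsilon> \<le> norm ((x n - y) - (x n - y'))" for n
        by (simp add: norm_minus_commute)
      have "eventually (\<lambda>n. norm (midpoint (x n - y) (x n - y')) \<le> \<rho> + \<eta> - \<delta>) sequentially"
        using eventually_conj[OF near_y near_y']
      proof (rule eventually_mono)
        fix n assume "norm (x n - y) < \<rho> + \<eta> \<and> norm (x n - y') < \<rho> + \<eta>"
        then show "norm (midpoint (x n - y) (x n - y')) \<le> \<rho> + \<eta> - \<delta>"
          using far[of n] by (intro \<delta>) (auto simp: \<eta>_def)
      qed
      moreover have "midpoint (x n - y) (x n - y') = x n - midpoint y y'" for n
        unfolding midpoint_eq_iff using midpoint_plus_self[of y y'] by (simp add: algebra_simps)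
      ultimately have "eventually (\<lambda>n. norm (x n - midpoint y y') \<le> \<rho> + \<eta> - \<delta>) sequentially"
        by simp
      moreover have "midpoint y y' \<in> Q"
        using closed_segment_subset[OF \<open>y \<in> Q\<close> \<open>y' \<in> Q\<close> \<open>convex Q\<close>] by auto
      ultimately have "asymptotic_radius Q x \<le> ereal (\<rho> + \<eta> - \<delta>)"
        by (intro asymptotic_radius_le)
      then show False using \<rho> \<open>\<delta> > 0\<close> by (simp add: \<eta>_def)
    qed
  qed
qed

definition asymptotic_center :: "'a::real_normed_vector set \<Rightarrow> (nat \<Rightarrow> 'a) \<Rightarrow> 'a \<Rightarrow> bool" where
  "asymptotic_center Q x z \<longleftrightarrow>
     z \<in> Q \<and> limsup (\<lambda>n. ereal (norm (x n - z))) = asymptotic_radius Q x"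

lemma asymptotic_center_eventually_less:
  assumes "asymptotic_center Q x z" and "asymptotic_radius Q x = ereal \<rho>" and "\<eta> > 0"
  shows "eventually (\<lambda>n. norm (x n - z) < \<rho> + \<eta>) sequentially"
proof -
  have "limsup (\<lambda>n. ereal (norm (x n - z))) < ereal (\<rho> + \<eta>)"
    using assms unfolding asymptotic_center_def by simp
  then show ?thesis by (auto dest: Limsup_lessD)
qed

lemma asymptotic_centerI:
  assumes "z \<in> Q" and \<rho>: "asymptotic_radius Q x = ereal \<rho>"
    and near: "\<And>\<eta>. \<eta> > 0 \<Longrightarrow> eventually (\<lambda>n. norm (x n - z) < \<rho> + \<eta>) sequentially"
  shows "asymptotic_center Q x z"
proof -
  have "limsup (\<lambda>n. ereal (norm (x n - z))) \<le> ereal \<rho> + ereal \<eta>" if "\<eta> > 0" for \<eta>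
    using near[OF that] by (intro Limsup_bounded) (auto elim: eventually_mono)
  then have "limsup (\<lambda>n. ereal (norm (x n - z))) \<le> asymptotic_radius Q x"
    unfolding \<rho> by (rule ereal_le_epsilon2)
  moreover have "asymptotic_radius Q x \<le> limsup (\<lambda>n. ereal (norm (x n - z)))"
    unfolding asymptotic_radius_def using \<open>z \<in> Q\<close> by (rule INF_lower)
  ultimately show ?thesis
    using \<open>z \<in> Q\<close> unfolding asymptotic_center_def by simp
qed

lemma approximate_asymptotic_centers_Cauchy:
  fixes x :: "nat \<Rightarrow> 'a::real_normed_vector"
  assumes UC: "uniformly_convex TYPE('a)" and "convex Q"
    and \<rho>: "asymptotic_radius Q x = ereal \<rho>"
    and yQ: "\<And>k. y k \<in> Q"
    and near: "\<And>\<eta>. \<eta> > 0 \<Longrightarrow>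
      eventually (\<lambda>k. eventually (\<lambda>n. norm (x n - y k) < \<rho> + \<eta>) sequentially) sequentially"
  shows "Cauchy y"
  unfolding Cauchy_def
proof (intro allI impI)
  fix \<epsilon> :: real assume "\<epsilon> > 0"
  obtain \<eta> where "\<eta> > 0" and close: "\<And>y y'. y \<in> Q \<Longrightarrow> y' \<in> Q \<Longrightarrow>
      eventually (\<lambda>n. norm (x n - y) < \<rho> + \<eta>) sequentially \<Longrightarrow>
      eventually (\<lambda>n. norm (x n - y') < \<rho> + \<eta>) sequentially \<Longrightarrow> norm (y - y') < \<epsilon>"
    using approximate_centers_close[OF UC \<open>convex Q\<close> \<rho> \<open>\<epsilon> > 0\<close>] by blast
  obtain K where K: "\<And>k. k \<ge> K \<Longrightarrow> eventually (\<lambda>n. norm (x n - y k) < \<rho> + \<eta>) sequentially"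
    using near[OF \<open>\<eta> > 0\<close>] unfolding eventually_sequentially by blast
  show "\<exists>K. \<forall>m\<ge>K. \<forall>n\<ge>K. dist (y m) (y n) < \<epsilon>"
    using close[OF yQ yQ K K] by (auto simp: dist_norm)
qed

lemma tendsto_asymptotic_center:
  fixes x :: "nat \<Rightarrow> 'a::real_normed_vector"
  assumes UC: "uniformly_convex TYPE('a)" and "convex Q"
    and z: "asymptotic_center Q x z" and \<rho>: "asymptotic_radius Q x = ereal \<rho>"
    and yQ: "\<And>k. y k \<in> Q"
    and near: "\<And>\<eta>. \<eta> > 0 \<Longrightarrow>
      eventually (\<lambda>k. eventually (\<lambda>n. norm (x n - y k) < \<rho> + \<eta>) sequentially) sequentially"
  shows "y \<longlonglongrightarrow> z"
  unfolding tendsto_iff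
proof (intro allI impI)
  fix \<epsilon> :: real assume "\<epsilon> > 0"
  obtain \<eta> where "\<eta> > 0" and close: "\<And>y y'. y \<in> Q \<Longrightarrow> y' \<in> Q \<Longrightarrow>
      eventually (\<lambda>n. norm (x n - y) < \<rho> + \<eta>) sequentially \<Longrightarrow>
      eventually (\<lambda>n. norm (x n - y') < \<rho> + \<eta>) sequentially \<Longrightarrow> norm (y - y') < \<epsilon>"
    using approximate_centers_close[OF UC \<open>convex Q\<close> \<rho> \<open>\<epsilon> > 0\<close>] by blast
  have "z \<in> Q" using z by (simp add: asymptotic_center_def)
  note z_near = asymptotic_center_eventually_less[OF z \<rho> \<open>\<eta> > 0\<close>]
  show "eventually (\<lambda>k. dist (y k) z < \<epsilon>) sequentially"
    using near[OF \<open>\<eta> > 0\<close>]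
  proof (rule eventually_mono)
    fix k assume "eventually (\<lambda>n. norm (x n - y k) < \<rho> + \<eta>) sequentially"
    then show "dist (y k) z < \<epsilon>"
      using close[OF yQ \<open>z \<in> Q\<close> _ z_near] by (simp add: dist_norm)
  qed
qed

lemma asymptotic_center_of_tendsto:
  assumes "z \<in> Q" and \<rho>: "asymptotic_radius Q x = ereal \<rho>" and "y \<longlonglongrightarrow> z"
    and near: "\<And>\<eta>. \<eta> > 0 \<Longrightarrow>
      eventually (\<lambda>k. eventually (\<lambda>n. norm (x n - y k) < \<rho> + \<eta>) sequentially) sequentially"
  shows "asymptotic_center Q x z"
proof (rule asymptotic_centerI[OF \<open>z \<in> Q\<close> \<rho>])
  fix \<eta> :: real assume "\<eta> > 0"
  have "eventually (\<lambda>k. eventually (\<lambda>n. norm (x n - y k) < \<rho> + \<eta>/2) sequentially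
      \<and> dist (y k) z < \<eta>/2) sequentially"
    using \<open>\<eta> > 0\<close> by (intro eventually_conj near tendstoD[OF \<open>y \<longlonglongrightarrow> z\<close>]) simp_all
  then obtain k where k: "eventually (\<lambda>n. norm (x n - y k) < \<rho> + \<eta>/2) sequentially"
    and "norm (y k - z) < \<eta>/2"
    using eventually_happens'[OF sequentially_bot] by (auto simp: dist_norm)
  show "eventually (\<lambda>n. norm (x n - z) < \<rho> + \<eta>) sequentially"
    using k
  proof (rule eventually_mono)
    fix n assume "norm (x n - y k) < \<rho> + \<eta>/2"
    moreover have "norm (x n - z) \<le> norm (x n - y k) + norm (y k - z)"
      using norm_triangle_ineq[of "x n - y k" "y k - z"] by simp
    ultimately show "norm (x n - z) < \<rho> + \<eta>" using \<open>norm (y k - z) < \<eta>/2\<close> by linarith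
  qed
qed

lemma asymptotic_center_exists:
  fixes x :: "nat \<Rightarrow> 'a::banach"
  assumes UC: "uniformly_convex TYPE('a)" and "closed Q" and "convex Q"
    and \<rho>: "asymptotic_radius Q x = ereal \<rho>"
  obtains z where "asymptotic_center Q x z"
proof -
  have "\<exists>y\<in>Q. eventually (\<lambda>n. norm (x n - y) < \<rho> + inverse (real (Suc k))) sequentially" for k
    using asymptotic_radius_lessE[of Q x "\<rho> + inverse (real (Suc k))"] \<rho> by auto
  then obtain y where yQ: "\<And>k. y k \<in> Q"
    and y: "\<And>k. eventually (\<lambda>n. norm (x n - y k) < \<rho> + inverse (real (Suc k))) sequentially"
    by metis
  have near: "eventually (\<lambda>k. eventually (\<lambda>n. norm (x n - y k) < \<rho> + \<eta>) sequentially) sequentially"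
    if "\<eta> > 0" for \<eta>
    using order_tendstoD(2)[OF LIMSEQ_inverse_real_of_nat that]
  proof (rule eventually_mono)
    fix k assume "inverse (real (Suc k)) < \<eta>"
    then show "eventually (\<lambda>n. norm (x n - y k) < \<rho> + \<eta>) sequentially"
      using y[of k] by (auto elim: eventually_mono)
  qed
  have "Cauchy y"
    using approximate_asymptotic_centers_Cauchy[OF UC \<open>convex Q\<close> \<rho> yQ near] .
  then obtain z where "y \<longlonglongrightarrow> z"
    using Cauchy_convergent convergent_def by blast
  moreover have "z \<in> Q"
    using closed_sequentially[OF \<open>closed Q\<close> yQ \<open>y \<longlonglongrightarrow> z\<close>] .
  ultimately show thesis
    using that asymptotic_center_of_tendsto[OF _ \<rho> _ near] by blast
qed

lemma funpow_in_invariant_set: "T ` Q \<subseteq> Q \<Longrightarrow> p \<in> Q \<Longrightarrow> (T ^^ n) p \<in> Q"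
  by (induction n) auto

lemma iterates_approximate_asymptotic_center:
  fixes T :: "'a::real_normed_vector \<Rightarrow> 'a" and \<alpha> :: "nat \<Rightarrow> real"
  assumes "T ` Q \<subseteq> Q" and "q \<in> Q"
    and z: "asymptotic_center Q (\<lambda>n. (T ^^ n) q) z"
    and \<rho>: "asymptotic_radius Q (\<lambda>n. (T ^^ n) q) = ereal \<rho>" and "\<rho> < r"
    and \<alpha>: "\<alpha> \<longlonglongrightarrow> 1"
    and bound: "\<And>p n. p \<in> Q \<Longrightarrow> norm (p - z) < r \<Longrightarrow> n \<ge> 1 \<Longrightarrow>
      norm ((T ^^ n) p - (T ^^ n) z) \<le> \<alpha> n * norm (p - z)"
    and "\<eta> > 0"
  shows "eventually (\<lambda>m. eventually (\<lambda>n. norm ((T ^^ n) q - (T ^^ m) z) < \<rho> + \<eta>) sequentially)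
           sequentially"
proof -
  have "(\<lambda>m. \<alpha> m * (\<rho> + \<eta>/2)) \<longlonglongrightarrow> \<rho> + \<eta>/2"
    using tendsto_mult[OF \<alpha> tendsto_const] by simp
  then have "eventually (\<lambda>m. \<alpha> m * (\<rho> + \<eta>/2) < \<rho> + \<eta>) sequentially"
    by (rule order_tendstoD(2)) (use \<open>\<eta> > 0\<close> in linarith)
  moreover have "eventually (\<lambda>m. \<alpha> m > 0) sequentially"
    using order_tendstoD(1)[OF \<alpha> zero_less_one] .
  moreover have "eventually (\<lambda>m. m \<ge> 1) sequentially"
    by (rule eventually_ge_at_top)
  ultimately show ?thesis
  proof eventually_elim
    fix m assume m: "\<alpha> m * (\<rho> + \<eta>/2) < \<rho> + \<eta>" "\<alpha> m > 0" "m \<ge> 1"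
    have "eventually (\<lambda>n. norm ((T ^^ n) q - z) < r) sequentially"
      using asymptotic_center_eventually_less[OF z \<rho>, of "r - \<rho>"] \<open>\<rho> < r\<close> by simp
    moreover have "eventually (\<lambda>n. norm ((T ^^ n) q - z) < \<rho> + \<eta>/2) sequentially"
      using asymptotic_center_eventually_less[OF z \<rho>, of "\<eta>/2"] \<open>\<eta> > 0\<close> by simp
    ultimately have "eventually (\<lambda>n. norm ((T ^^ (n + m)) q - (T ^^ m) z) < \<rho> + \<eta>) sequentially"
    proof eventually_elim
      fix n assume n: "norm ((T ^^ n) q - z) < r" "norm ((T ^^ n) q - z) < \<rho> + \<eta>/2"
      have "(T ^^ n) q \<in> Q" using funpow_in_invariant_set[OF \<open>T ` Q \<subseteq> Q\<close> \<open>q \<in> Q\<close>] .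
      have "norm ((T ^^ (n + m)) q - (T ^^ m) z) = norm ((T ^^ m) ((T ^^ n) q) - (T ^^ m) z)"
        by (simp add: funpow_add add.commute[of n m])
      also have "\<dots> \<le> \<alpha> m * norm ((T ^^ n) q - z)"
        using bound[OF \<open>(T ^^ n) q \<in> Q\<close> _ \<open>m \<ge> 1\<close>] n(1) by simp
      also have "\<dots> \<le> \<alpha> m * (\<rho> + \<eta>/2)"
        using n(2) \<open>\<alpha> m > 0\<close> by (intro mult_left_mono) auto
      also have "\<dots> < \<rho> + \<eta>" using m(1) .
      finally show "norm ((T ^^ (n + m)) q - (T ^^ m) z) < \<rho> + \<eta>" .
    qed
    then show "eventually (\<lambda>n. norm ((T ^^ n) q - (T ^^ m) z) < \<rho> + \<eta>) sequentially"
      by (subst (asm) eventually_sequentially_seg)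
  qed
qed

lemma continuous_within_linear_bound:
  fixes T :: "'a::real_normed_vector \<Rightarrow> 'b::real_normed_vector"
  assumes "r > 0" and bound: "\<And>p. p \<in> Q \<Longrightarrow> norm (p - z) < r \<Longrightarrow> norm (T p - T z) \<le> c * norm (p - z)"
  shows "continuous (at z within Q) T"
  unfolding continuous_within_eps_delta
proof (intro allI impI)
  fix \<epsilon> :: real assume "\<epsilon> > 0"
  show "\<exists>d>0. \<forall>p\<in>Q. dist p z < d \<longrightarrow> dist (T p) (T z) < \<epsilon>"
  proof (intro exI[of _ "min r (\<epsilon> / (\<bar>c\<bar> + 1))"] conjI ballI impI)
    show "min r (\<epsilon> / (\<bar>c\<bar> + 1)) > 0" using \<open>r > 0\<close> \<open>\<epsilon> > 0\<close> by simp
  next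
    fix p assume "p \<in> Q" and d: "dist p z < min r (\<epsilon> / (\<bar>c\<bar> + 1))"
    then have "norm (T p - T z) \<le> c * norm (p - z)"
      by (intro bound) (auto simp: dist_norm)
    also have "\<dots> \<le> \<bar>c\<bar> * norm (p - z)"
      by (intro mult_right_mono) auto
    also have "\<dots> \<le> \<bar>c\<bar> * (\<epsilon> / (\<bar>c\<bar> + 1))"
      using d by (intro mult_left_mono) (auto simp: dist_norm)
    also have "\<dots> < \<epsilon>"
      using \<open>\<epsilon> > 0\<close> by (simp add: field_simps)
    finally show "dist (T p) (T z) < \<epsilon>" by (simp add: dist_norm)
  qed
qed

lemma fixed_point_of_tendsto_orbit:
  fixes T :: "'a::t2_space \<Rightarrow> 'a"
  assumes "(\<lambda>m. (T ^^ m) z) \<longlonglongrightarrow> z" and "continuous (at z within Q) T" and "\<And>m. (T ^^ m) z \<in> Q"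
  shows "T z = z"
proof (rule LIMSEQ_unique)
  show "(\<lambda>m. T ((T ^^ m) z)) \<longlonglongrightarrow> T z"
    using assms(2,3,1) by (rule continuous_within_tendsto_compose')
  show "(\<lambda>m. T ((T ^^ m) z)) \<longlonglongrightarrow> z"
    using LIMSEQ_Suc[OF assms(1)] by simp
qed

theorem mainTheorem2:
  fixes Q :: "'a::banach set" and T :: "'a \<Rightarrow> 'a"
    and \<alpha> :: "nat \<Rightarrow> 'a \<Rightarrow> real" and r :: real
  assumes "uniformly_convex TYPE('a)"
    and "Q \<noteq> {}" and "bounded Q" and "closed Q" and "convex Q"
    and "r > 0"
    and "\<And>q. q \<in> Q \<Longrightarrow> (\<lambda>n. \<alpha> n q) \<longlonglongrightarrow> 1"
    and "T ` Q \<subseteq> Q"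
    and "\<And>p q n. p \<in> Q \<Longrightarrow> q \<in> Q \<Longrightarrow> norm (p - q) < r \<Longrightarrow> n \<ge> 1 \<Longrightarrow>
           norm ((T ^^ n) p - (T ^^ n) q) \<le> \<alpha> n q * norm (p - q)"
    and "\<exists>q0\<in>Q. asymptotic_radius Q (\<lambda>n. (T ^^ n) q0) < ereal r"
  shows "\<exists>x\<in>Q. T x = x"
proof -
  note UC = assms(1) and TQ = assms(8)
  obtain q where "q \<in> Q" and rad: "asymptotic_radius Q (\<lambda>n. (T ^^ n) q) < ereal r"
    using assms(10) by blast
  then obtain \<rho> where \<rho>: "asymptotic_radius Q (\<lambda>n. (T ^^ n) q) = ereal \<rho>" and "\<rho> < r"
    using asymptotic_radius_nonneg[of Q "\<lambda>n. (T ^^ n) q"]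
    by (cases "asymptotic_radius Q (\<lambda>n. (T ^^ n) q)") auto
  obtain z where z: "asymptotic_center Q (\<lambda>n. (T ^^ n) q) z"
    using asymptotic_center_exists[OF UC \<open>closed Q\<close> \<open>convex Q\<close> \<rho>] .
  then have "z \<in> Q" by (simp add: asymptotic_center_def)
  have orbit: "(T ^^ m) z \<in> Q" for m
    using funpow_in_invariant_set[OF TQ \<open>z \<in> Q\<close>] .
  have bound: "norm ((T ^^ n) p - (T ^^ n) z) \<le> \<alpha> n z * norm (p - z)"
    if "p \<in> Q" "norm (p - z) < r" "n \<ge> 1" for p n
    using assms(9) \<open>z \<in> Q\<close> that by blast
  have "(\<lambda>m. (T ^^ m) z) \<longlonglongrightarrow> z"
    using tendsto_asymptotic_center[OF UC \<open>convex Q\<close> z \<rho> orbit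
        iterates_approximate_asymptotic_center[OF TQ \<open>q \<in> Q\<close> z \<rho> \<open>\<rho> < r\<close> assms(7)[OF \<open>z \<in> Q\<close>] bound]] .
  moreover have "continuous (at z within Q) T"
    using bound[of _ 1] by (intro continuous_within_linear_bound[OF \<open>r > 0\<close>]) simp
  ultimately have "T z = z"
    using orbit by (rule fixed_point_of_tendsto_orbit)
  then show ?thesis using \<open>z \<in> Q\<close> by blast
qed

end
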